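(* Let $S^{ES}$ denote the complexity function of the family of evolutionary stable configurations (in the one-dimensional Riviera model). Then for every $\rho$ with $\frac{3}{5} < \rho < \frac{2}{3}$, $$S^{ES}(\rho) = (2\rho - 1) \ln(2\rho - 1) - (2 - 3\rho) \ln(2 - 3\rho) - (5\rho - 3) \ln(5\rho - 3).$$
   Context: A configuration of length $n\ge 0$ is a binary string $c_1c_2\cdots c_n$; $c_k=1$ means lot $k$ is occupied by a house, $c_k=0$ that it is empty. A house at position $k$ is blocked (from sunlight) if $2\le k\le n-1$ and $c_{k-1}=c_{k+1}=1$; lots beyond the ends of the string never obstruct sunlight. A configuration is permissible if no house is blocked. It is maximal (jammed) if it is permissible and, for every $k$ with $c_k=0$, the string obtained by setting $c_k=1$ is not permissible. A maximal configuration is resistant to predators if, for every $k$ with $c_k=0$, in the string obtained by setting $c_k=1$ the new house at position $k$ is blocked; it is resistant to altruists if, for every $k$ with $c_k=0$, in the string obtained by setting $c_k=1$ some house at a position $l\ne k$ is blocked. An evolutionary stable configuration is a maximal configuration resistant to both predators and altruists. Let $J_{k,n}$ be the number of such configurations of length $n$ with exactly $k$ occupied lots; whenever $J_{k,n}=0$ it is redefined to be $1$. The complexity function is $S(\rho)=\sup \limsup_{i\to\infty} \frac{\ln J_{k_i,n_i}}{n_i}$, where the supremum ranges over all sequences $((k_i,n_i))_i$ of pairs of non-negative integers with $n_i\to\infty$ and $k_i/n_i\to\rho$. *)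

theory Defs
  imports "HOL-Analysis.Analysis"
begin

text \<open>Configurations are bool lists; position k (1-based in the paper) is index k-1 here.
  True = occupied lot.\<close>

definition blocked :: "bool list \<Rightarrow> nat \<Rightarrow> bool" where
  "blocked c k \<longleftrightarrow> 0 < k \<and> k + 1 < length c \<and> c ! k \<and> c ! (k - 1) \<and> c ! (k + 1)"

definition permissible :: "bool list \<Rightarrow> bool" where
  "permissible c \<longleftrightarrow> (\<forall>k < length c. \<not> blocked c k)"

definition maximal_conf :: "bool list \<Rightarrow> bool" where
  "maximal_conf c \<longleftrightarrow> permissible c \<and>
     (\<forall>k < length c. \<not> c ! k \<longrightarrow> \<not> permissible (c[k := True]))"

definition resistant_predators :: "bool list \<Rightarrow> bool" where
  "resistant_predators c \<longleftrightarrow>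
     (\<forall>k < length c. \<not> c ! k \<longrightarrow> blocked (c[k := True]) k)"

definition resistant_altruists :: "bool list \<Rightarrow> bool" where
  "resistant_altruists c \<longleftrightarrow>
     (\<forall>k < length c. \<not> c ! k \<longrightarrow> (\<exists>l < length c. l \<noteq> k \<and> blocked (c[k := True]) l))"

definition evol_stable :: "bool list \<Rightarrow> bool" where
  "evol_stable c \<longleftrightarrow> maximal_conf c \<and> resistant_predators c \<and> resistant_altruists c"

definition J_ES :: "nat \<Rightarrow> nat \<Rightarrow> nat" where
  "J_ES k n = (let m = card {c :: bool list. length c = n \<and> length (filter id c) = k \<and> evol_stable c}
               in if m = 0 then 1 else m)"

definition S_ES :: "real \<Rightarrow> ereal" where
  "S_ES \<rho> = Sup {limsup (\<lambda>i. ereal (ln (real (J_ES (k i) (n i))) / real (n i))) | k n :: nat \<Rightarrow> nat.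
                  filterlim n at_top sequentially \<and>
                  (\<lambda>i. real (k i) / real (n i)) \<longlonglongrightarrow> \<rho>}"

end

(*
  A configuration c is evolutionary stable iff each empty lot has houses on both sides and
  a further house at distance two; equivalently, the padded word 0c0 avoids the factors
  00, 111 and 01010. These words are exactly the concatenations of the tiles 110 and 11011
  followed by one of the blocks 1, 11, 1011. With L tiles, a of them long, a configuration has
  length about 3L + 2a and about 2L + a houses, so density rho forces L ~ (2 rho - 1) n and
  a ~ (2 - 3 rho) n, and up to a factor 3 the configurations are counted by the binomial
  coefficient (L choose a). Stirling-type bounds give
  ln (L choose a) = L ln L - a ln a - (L - a) ln (L - a) + O(ln L), and (2 rho - 1) - (2 - 3 rho) = 5 rho - 3.
*)

theory Submission
  imports Defs "HOL-Library.Sublist"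
begin

lemma blocked_update_self:
  "k < length c \<Longrightarrow> blocked (c[k := True]) k \<longleftrightarrow> 0 < k \<and> k + 1 < length c \<and> c ! (k - 1) \<and> c ! (k + 1)"
  by (cases k) (auto simp: blocked_def nth_list_update)

lemma blocked_update_other:
  assumes "l \<noteq> k" "l \<noteq> k - 1" "l \<noteq> k + 1"
  shows "blocked (c[k := True]) l \<longleftrightarrow> blocked c l"
  using assms by (cases l) (auto simp: blocked_def nth_list_update)

lemma resistant_predators_iff:
  "resistant_predators c \<longleftrightarrow>
     (\<forall>k < length c. \<not> c ! k \<longrightarrow> 0 < k \<and> k + 1 < length c \<and> c ! (k - 1) \<and> c ! (k + 1))"
  by (simp add: resistant_predators_def blocked_update_self)

lemma maximal_conf_if_resistant_predators:
  "permissible c \<Longrightarrow> resistant_predators c \<Longrightarrow> maximal_conf c"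
  by (auto simp: maximal_conf_def permissible_def resistant_predators_def)

lemma resistant_altruists_iff:
  assumes "permissible c" "resistant_predators c"
  shows "resistant_altruists c \<longleftrightarrow>
     (\<forall>k < length c. \<not> c ! k \<longrightarrow> (1 < k \<and> c ! (k - 2)) \<or> (k + 2 < length c \<and> c ! (k + 2)))"
proof -
  have "(\<exists>l < length c. l \<noteq> k \<and> blocked (c[k := True]) l) \<longleftrightarrow>
      (1 < k \<and> c ! (k - 2)) \<or> (k + 2 < length c \<and> c ! (k + 2))"
    if "k < length c" "\<not> c ! k" for k
  proof -
    have flank: "0 < k" "k + 1 < length c" "c ! (k - 1)" "c ! (k + 1)"
      using assms(2) that by (auto simp: resistant_predators_iff)
    have "\<not> blocked (c[k := True]) l" if "l < length c" "l \<noteq> k" "l \<noteq> k - 1" "l \<noteq> k + 1" for l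
      using assms(1) that by (simp add: blocked_update_other permissible_def)
    moreover have "blocked (c[k := True]) (k - 1) \<longleftrightarrow> 1 < k \<and> c ! (k - 2)"
      using flank by (auto simp: blocked_def nth_list_update numeral_2_eq_2)
    moreover have "blocked (c[k := True]) (k + 1) \<longleftrightarrow> k + 2 < length c \<and> c ! (k + 2)"
      using flank by (auto simp: blocked_def nth_list_update)
    moreover have "k - 1 < length c" "k - 1 \<noteq> k" "k + 1 \<noteq> k" using flank by auto
    ultimately show ?thesis
      using flank(2) by blast
  qed
  then show ?thesis by (auto simp: resistant_altruists_def)
qed

lemma evol_stable_iff_vacancies:
  "evol_stable c \<longleftrightarrow> permissible c \<and> resistant_predators c \<and>
     (\<forall>k < length c. \<not> c ! k \<longrightarrow> (1 < k \<and> c ! (k - 2)) \<or> (k + 2 < length c \<and> c ! (k + 2)))"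
  using maximal_conf_if_resistant_predators resistant_altruists_iff
  by (auto simp: evol_stable_def maximal_conf_def)

lemma sublist_iff_nth:
  "sublist p d \<longleftrightarrow> (\<exists>i. i + length p \<le> length d \<and> (\<forall>j < length p. d ! (i + j) = p ! j))"
proof
  assume "sublist p d"
  then obtain ps ss where "d = ps @ p @ ss" by (auto simp: sublist_def)
  then show "\<exists>i. i + length p \<le> length d \<and> (\<forall>j < length p. d ! (i + j) = p ! j)"
    by (intro exI[of _ "length ps"]) (simp add: nth_append)
next
  assume "\<exists>i. i + length p \<le> length d \<and> (\<forall>j < length p. d ! (i + j) = p ! j)"
  then obtain i where i: "i + length p \<le> length d" "\<forall>j < length p. d ! (i + j) = p ! j" by blast
  then have "take (length p) (drop i d) = p" by (intro nth_equalityI) auto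
  then have "d = take i d @ p @ drop (length p) (drop i d)"
    by (metis append_take_drop_id)
  then show "sublist p d" by (metis sublist_appendI)
qed

lemma not_sublist_FF:
  "\<not> sublist [False, False] d \<longleftrightarrow> (\<forall>i. i + 1 < length d \<longrightarrow> d ! i \<or> d ! (i + 1))"
  by (simp add: sublist_iff_nth All_less_Suc2 Suc_le_eq)

lemma not_sublist_TTT:
  "\<not> sublist [True, True, True] d \<longleftrightarrow>
     (\<forall>i. i + 2 < length d \<longrightarrow> \<not> (d ! i \<and> d ! (i + 1) \<and> d ! (i + 2)))"
  by (simp add: sublist_iff_nth All_less_Suc2 numeral_eq_Suc Suc_le_eq) blast

lemma not_sublist_FTFTF:
  "\<not> sublist [False, True, False, True, False] d \<longleftrightarrow>
     (\<forall>i. i + 4 < length d \<longrightarrow>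
        \<not> (\<not> d ! i \<and> d ! (i + 1) \<and> \<not> d ! (i + 2) \<and> d ! (i + 3) \<and> \<not> d ! (i + 4)))"
  by (simp add: sublist_iff_nth All_less_Suc2 numeral_eq_Suc Suc_le_eq) blast

text \<open>Lots beyond the ends count as empty.\<close>

definition pad :: "bool list \<Rightarrow> bool list" where
  "pad c = False # c @ [False]"

lemma length_pad [simp]: "length (pad c) = length c + 2"
  by (simp add: pad_def)

lemma nth_pad: "i \<le> length c + 1 \<Longrightarrow> pad c ! i \<longleftrightarrow> 0 < i \<and> i \<le> length c \<and> c ! (i - 1)"
  by (cases i) (auto simp: pad_def nth_append)

lemma permissible_iff_pad:
  "permissible c \<longleftrightarrow> \<not> sublist [True, True, True] (pad c)"
proof -
  have "pad c ! i \<and> pad c ! (i + 1) \<and> pad c ! (i + 2) \<longleftrightarrow> blocked c i" if "i < length c" for i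
    using that by (auto simp: nth_pad blocked_def)
  then show ?thesis by (auto simp: permissible_def not_sublist_TTT)
qed

lemma resistant_predators_iff_pad:
  assumes "c \<noteq> []"
  shows "resistant_predators c \<longleftrightarrow> \<not> sublist [False, False] (pad c)"
  unfolding resistant_predators_iff not_sublist_FF
proof (intro iffI allI impI)
  fix i assume flank: "\<forall>k < length c. \<not> c ! k \<longrightarrow> 0 < k \<and> k + 1 < length c \<and> c ! (k - 1) \<and> c ! (k + 1)"
    and i: "i + 1 < length (pad c)"
  show "pad c ! i \<or> pad c ! (i + 1)"
  proof (cases "i < length c")
    case True
    then show ?thesis using flank by (auto simp: nth_pad)
  next
    case False
    have last: "length c - 1 < length c" using assms by simp
    have "c ! (length c - 1)"
    proof (rule ccontr)
      assume "\<not> c ! (length c - 1)"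
      then have "length c - 1 + 1 < length c" using flank last by blast
      then show False by simp
    qed
    moreover have "i = length c" using False i by simp
    ultimately show ?thesis using assms by (simp add: nth_pad)
  qed
next
  fix k assume no_FF: "\<forall>i. i + 1 < length (pad c) \<longrightarrow> pad c ! i \<or> pad c ! (i + 1)"
    and k: "k < length c" "\<not> c ! k"
  have "pad c ! (k + 1) = c ! k" using k by (simp add: nth_pad)
  then have "pad c ! k" "pad c ! (k + 2)" using no_FF[rule_format, of k] no_FF[rule_format, of "k + 1"] k by auto
  then show "0 < k \<and> k + 1 < length c \<and> c ! (k - 1) \<and> c ! (k + 1)" using k by (auto simp: nth_pad)
qed

lemma altruist_condition_iff_pad:
  assumes "resistant_predators c"
  shows "(\<forall>k < length c. \<not> c ! k \<longrightarrow> (1 < k \<and> c ! (k - 2)) \<or> (k + 2 < length c \<and> c ! (k + 2)))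
    \<longleftrightarrow> \<not> sublist [False, True, False, True, False] (pad c)"
  unfolding not_sublist_FTFTF
proof (intro iffI allI impI notI)
  fix i assume vac: "\<forall>k < length c. \<not> c ! k \<longrightarrow> (1 < k \<and> c ! (k - 2)) \<or> (k + 2 < length c \<and> c ! (k + 2))"
    and i: "i + 4 < length (pad c)"
    and pat: "\<not> pad c ! i \<and> pad c ! (i + 1) \<and> \<not> pad c ! (i + 2) \<and> pad c ! (i + 3) \<and> \<not> pad c ! (i + 4)"
  have i4: "i + 4 - 1 = i + 3" by simp
  have "\<not> c ! (i + 1)" "\<not> (0 < i \<and> c ! (i - 1))" "\<not> (i + 3 < length c \<and> c ! (i + 3))"
    using i pat nth_pad[of i c] nth_pad[of "i + 2" c] nth_pad[of "i + 4" c, unfolded i4] by auto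
  moreover have "(1 < i + 1 \<and> c ! (i + 1 - 2)) \<or> (i + 1 + 2 < length c \<and> c ! (i + 1 + 2))"
    using vac[rule_format, of "i + 1"] \<open>\<not> c ! (i + 1)\<close> i by fastforce
  then have "(0 < i \<and> c ! (i - 1)) \<or> (i + 3 < length c \<and> c ! (i + 3))"
    by (simp add: numeral_eq_Suc)
  ultimately show False by blast
next
  fix k assume no_FTFTF: "\<forall>i. i + 4 < length (pad c) \<longrightarrow>
      \<not> (\<not> pad c ! i \<and> pad c ! (i + 1) \<and> \<not> pad c ! (i + 2) \<and> pad c ! (i + 3) \<and> \<not> pad c ! (i + 4))"
    and k: "k < length c" "\<not> c ! k"
  have flank: "0 < k" "k + 1 < length c" "c ! (k - 1)" "c ! (k + 1)"
    using assms k by (auto simp: resistant_predators_iff)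
  have shift: "k - 1 + 1 = k" "k - 1 + 2 = k + 1" "k - 1 + 3 = k + 2" "k - 1 + 4 = k + 3"
    and unshift: "k + 1 - 1 = k" "k + 2 - 1 = k + 1" "k + 3 - 1 = k + 2" "k - 1 - 1 = k - 2"
    using flank by simp_all
  have "\<not> (\<not> pad c ! (k - 1) \<and> pad c ! k \<and> \<not> pad c ! (k + 1) \<and> pad c ! (k + 2) \<and> \<not> pad c ! (k + 3))"
    using no_FTFTF[rule_format, of "k - 1", unfolded shift] flank by simp
  moreover have "pad c ! k" "\<not> pad c ! (k + 1)" "pad c ! (k + 2)"
    using nth_pad[of k c] nth_pad[of "k + 1" c, unfolded unshift] nth_pad[of "k + 2" c, unfolded unshift] flank k
    by auto
  moreover have "pad c ! (k - 1) \<longleftrightarrow> 1 < k \<and> c ! (k - 2)"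
    using nth_pad[of "k - 1" c, unfolded unshift] flank by auto
  moreover have "pad c ! (k + 3) \<longleftrightarrow> k + 2 < length c \<and> c ! (k + 2)"
    using nth_pad[of "k + 3" c, unfolded unshift] flank by auto
  ultimately show "(1 < k \<and> c ! (k - 2)) \<or> (k + 2 < length c \<and> c ! (k + 2))"
    by blast
qed

definition pattern_free :: "bool list \<Rightarrow> bool" where
  "pattern_free d \<longleftrightarrow>
     \<not> sublist [False, False] d \<and> \<not> sublist [True, True, True] d \<and>
     \<not> sublist [False, True, False, True, False] d"

lemma evol_stable_iff_pattern_free:
  assumes "c \<noteq> []"
  shows "evol_stable c \<longleftrightarrow> pattern_free (pad c)"
proof -
  have "evol_stable c \<longleftrightarrow> \<not> sublist [True, True, True] (pad c) \<and> \<not> sublist [False, False] (pad c) \<and>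
      (\<forall>k < length c. \<not> c ! k \<longrightarrow> (1 < k \<and> c ! (k - 2)) \<or> (k + 2 < length c \<and> c ! (k + 2)))"
    unfolding evol_stable_iff_vacancies permissible_iff_pad resistant_predators_iff_pad[OF assms] ..
  also have "\<dots> \<longleftrightarrow> pattern_free (pad c)"
    unfolding pattern_free_def using altruist_condition_iff_pad resistant_predators_iff_pad[OF assms]
    by blast
  finally show ?thesis .
qed

fun tile :: "bool \<Rightarrow> bool list" where
  "tile False = [True, True, False]"
| "tile True = [True, False, True, True, False]"

abbreviation tiling :: "bool list \<Rightarrow> bool list" where
  "tiling w \<equiv> concat (map tile w)"

definition final_blocks :: "bool list set" where
  "final_blocks = {[True], [True, True], [True, False, True, True]}"

lemma pattern_free_Cons_tile: "pattern_free (False # tile b @ s) \<longleftrightarrow> pattern_free (False # s)"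
  by (cases b) (auto simp: pattern_free_def sublist_Cons_right)

lemma pattern_free_pad_cases:
  assumes pf: "pattern_free (pad c)" and "c \<noteq> []"
  shows "c \<in> final_blocks \<or> (\<exists>b s. c = tile b @ s \<and> s \<noteq> [])"
proof -
  note forbidden = pf[unfolded pattern_free_def pad_def]
  obtain c1 where c: "c = True # c1"
    using assms by (cases c) (auto simp: pattern_free_def pad_def sublist_Cons_right)
  show ?thesis
  proof (cases c1)
    case Nil
    then show ?thesis using c by (simp add: final_blocks_def)
  next
    case (Cons x c2)
    note c1 = this
    show ?thesis
    proof (cases x)
      case True
      show ?thesis
      proof (cases c2)
        case Nil
        then show ?thesis using c c1 True by (simp add: final_blocks_def)
      next
        case (Cons y c3)
        then have "\<not> y" "c3 \<noteq> []"
          using forbidden c c1 True by (auto simp: sublist_Cons_right)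
        then have "c = tile False @ c3 \<and> c3 \<noteq> []" using c Cons c1 True by simp
        then show ?thesis by blast
      qed
    next
      case False
      obtain c3 where c2: "c2 = True # c3"
        using forbidden c c1 False by (cases c2) (auto simp: sublist_Cons_right)
      obtain c4 where c3: "c3 = True # c4"
        using forbidden c c1 False c2
        by (cases c3 rule: list.exhaust[case_product bool.exhaust]) (auto simp: sublist_Cons_right)
      show ?thesis
      proof (cases c4)
        case Nil
        then show ?thesis using c c1 False c2 c3 by (simp add: final_blocks_def)
      next
        case (Cons z c5)
        then have "\<not> z" "c5 \<noteq> []"
          using forbidden c c1 False c2 c3 by (auto simp: sublist_Cons_right)
        then have "c = tile True @ c5 \<and> c5 \<noteq> []" using c Cons c1 False c2 c3 by simp
        then show ?thesis by blast
      qed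
    qed
  qed
qed

lemma pattern_free_decompose:
  "pattern_free (pad c) \<Longrightarrow> c \<noteq> [] \<Longrightarrow>
     \<exists>w f. c = tiling w @ f \<and> f \<in> final_blocks"
proof (induction c rule: length_induct)
  case (1 c)
  from pattern_free_pad_cases[OF "1.prems"] show ?case
  proof (elim disjE exE conjE)
    assume "c \<in> final_blocks"
    then show ?case by (intro exI[of _ "[]"] exI[of _ c]) simp
  next
    fix b s assume c: "c = tile b @ s" and "s \<noteq> []"
    moreover have "pattern_free (pad s)"
      using "1.prems"(1) c pattern_free_Cons_tile[of b "s @ [False]"] by (simp add: pad_def)
    moreover have "length s < length c" using c by (cases b) auto
    ultimately obtain w f where "s = tiling w @ f" "f \<in> final_blocks"
      using "1.IH" by blast
    then show ?case using c by (intro exI[of _ "b # w"] exI[of _ f]) auto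
  qed
qed

lemma pattern_free_tiling: "pattern_free (pad (tiling w @ [True, True]))"
proof (induction w)
  case Nil
  then show ?case by (simp add: pad_def pattern_free_def sublist_Cons_right)
next
  case (Cons b w)
  then show ?case by (simp add: pad_def pattern_free_Cons_tile)
qed

lemma tile_append_inject: "tile a @ x = tile b @ y \<Longrightarrow> a = b \<and> x = y"
  by (cases a; cases b) auto

lemma inj_tiling: "inj tiling"
proof (rule injI)
  fix w1 w2 :: "bool list"
  show "tiling w1 = tiling w2 \<Longrightarrow> w1 = w2"
  proof (induction w1 arbitrary: w2)
    case Nil
    then show ?case by (cases w2) (auto elim: tile.elims)
  next
    case (Cons a w1)
    then show ?case by (cases w2) (auto dest: tile_append_inject elim: tile.elims)
  qed
qed

abbreviation houses :: "bool list \<Rightarrow> nat" where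
  "houses c \<equiv> length (filter id c)"

lemma length_tiling: "length (tiling w) = 3 * length w + 2 * houses w"
  by (induction w) (auto elim: tile.elims)

lemma houses_tiling: "houses (tiling w) = 2 * length w + houses w"
  by (induction w) (auto elim: tile.elims)

definition bool_words :: "nat \<Rightarrow> nat \<Rightarrow> bool list set" where
  "bool_words L a = {w. length w = L \<and> houses w = a}"

lemma finite_bool_words: "finite (bool_words L a)"
proof -
  have "finite {w :: bool list. set w \<subseteq> UNIV \<and> length w = L}" by (rule finite_lists_length_eq) simp
  then show ?thesis by (rule finite_subset[rotated]) (auto simp: bool_words_def)
qed

lemma bool_words_Suc:
  "bool_words (Suc L) a =
     Cons False ` bool_words L a \<union> (if a = 0 then {} else Cons True ` bool_words L (a - 1))"
  by (auto simp: bool_words_def length_Suc_conv image_iff split: if_splits)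

lemma card_bool_words: "card (bool_words L a) = L choose a"
proof (induction L arbitrary: a)
  case 0
  have "bool_words 0 a = (if a = 0 then {[]} else {})" by (auto simp: bool_words_def)
  then show ?case by simp
next
  case (Suc L)
  show ?case
  proof (cases a)
    case 0
    then show ?thesis using Suc.IH[of 0] by (simp add: bool_words_Suc card_image)
  next
    case (Suc a')
    have "card (bool_words (Suc L) a) = card (Cons False ` bool_words L a) + card (Cons True ` bool_words L a')"
      unfolding bool_words_Suc using Suc by (subst card_Un_disjoint) (auto simp: finite_bool_words)
    also have "\<dots> = (L choose a) + (L choose a')" by (simp add: card_image Suc.IH)
    finally show ?thesis using Suc by simp
  qed
qed

definition es_configs :: "nat \<Rightarrow> nat \<Rightarrow> bool list set" where
  "es_configs n k = {c. length c = n \<and> houses c = k \<and> evol_stable c}"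

lemma finite_es_configs: "finite (es_configs n k)"
proof -
  have "finite {w :: bool list. set w \<subseteq> UNIV \<and> length w = n}" by (rule finite_lists_length_eq) simp
  then show ?thesis by (rule finite_subset[rotated]) (auto simp: es_configs_def)
qed

lemma J_ES_eq: "J_ES k n = max 1 (card (es_configs n k))"
  by (simp add: J_ES_def es_configs_def Let_def max_def)

text \<open>A configuration of length \<open>n\<close> with \<open>k\<close> houses made of \<open>L\<close> tiles, \<open>a\<close> of them long,
  followed by the final block \<open>f\<close> satisfies \<open>n = 3 L + 2 a + length f\<close> and
  \<open>k = 2 L + a + houses f\<close>; solving for \<open>L\<close> and \<open>a\<close> gives:\<close>

definition num_tiles :: "nat \<Rightarrow> nat \<Rightarrow> bool list \<Rightarrow> nat" where
  "num_tiles n k f = 2 * (k - houses f) - (n - length f)"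

definition num_long_tiles :: "nat \<Rightarrow> nat \<Rightarrow> bool list \<Rightarrow> nat" where
  "num_long_tiles n k f = 2 * (n - length f) - 3 * (k - houses f)"

lemma es_configs_subset_tilings:
  assumes "0 < n"
  shows "es_configs n k \<subseteq> (\<Union>f \<in> final_blocks. (\<lambda>w. tiling w @ f) `
           bool_words (num_tiles n k f) (num_long_tiles n k f))"
proof
  fix c assume c: "c \<in> es_configs n k"
  then have "c \<noteq> []" using assms by (auto simp: es_configs_def)
  moreover have "pattern_free (pad c)"
    using c \<open>c \<noteq> []\<close> evol_stable_iff_pattern_free by (simp add: es_configs_def)
  ultimately obtain w f where wf: "c = tiling w @ f" "f \<in> final_blocks"
    using pattern_free_decompose by blast
  then have "n = 3 * length w + 2 * houses w + length f" "k = 2 * length w + houses w + houses f"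
    using c by (auto simp: es_configs_def length_tiling houses_tiling)
  then have "w \<in> bool_words (num_tiles n k f) (num_long_tiles n k f)"
    by (simp add: bool_words_def num_tiles_def num_long_tiles_def)
  with wf show "c \<in> (\<Union>f \<in> final_blocks. (\<lambda>w. tiling w @ f) `
           bool_words (num_tiles n k f) (num_long_tiles n k f))"
    by blast
qed

lemma card_es_configs_le:
  assumes "0 < n"
  shows "card (es_configs n k) \<le>
    (\<Sum>f \<in> final_blocks. num_tiles n k f choose num_long_tiles n k f)"
proof -
  have "card (es_configs n k) \<le> card (\<Union>f \<in> final_blocks. (\<lambda>w. tiling w @ f) `
           bool_words (num_tiles n k f) (num_long_tiles n k f))"
    by (intro card_mono es_configs_subset_tilings assms)
       (simp add: final_blocks_def finite_bool_words)
  also have "\<dots> \<le> (\<Sum>f \<in> final_blocks. card ((\<lambda>w. tiling w @ f) `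
           bool_words (num_tiles n k f) (num_long_tiles n k f)))"
    by (rule card_UN_le) (simp add: final_blocks_def)
  also have "\<dots> \<le> (\<Sum>f \<in> final_blocks. num_tiles n k f choose num_long_tiles n k f)"
    by (intro sum_mono) (metis card_bool_words card_image_le finite_bool_words)
  finally show ?thesis .
qed

lemma card_es_configs_ge: "L choose a \<le> card (es_configs (3 * L + 2 * a + 2) (2 * L + a + 2))"
proof -
  have "inj_on (\<lambda>w. tiling w @ [True, True]) (bool_words L a)"
    using inj_tiling by (auto intro: inj_onI dest: injD)
  moreover have "(\<lambda>w. tiling w @ [True, True]) ` bool_words L a \<subseteq> es_configs (3 * L + 2 * a + 2) (2 * L + a + 2)"
    using evol_stable_iff_pattern_free pattern_free_tiling
    by (auto simp: es_configs_def bool_words_def length_tiling houses_tiling)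
  ultimately have "card (bool_words L a) \<le> card (es_configs (3 * L + 2 * a + 2) (2 * L + a + 2))"
    using card_inj_on_le finite_es_configs by blast
  then show ?thesis by (simp add: card_bool_words)
qed

lemma ln_fact_lower: "real m * ln (real m) - real m \<le> ln (fact m)"
proof (induction m)
  case 0
  then show ?case by simp
next
  case (Suc m)
  have "real m * (ln (real m + 1) - ln (real m)) \<le> 1"
  proof (cases "m = 0")
    case False
    then have "ln ((real m + 1) / real m) \<le> (real m + 1) / real m - 1"
      by (intro ln_le_minus_one) simp
    then have "ln (real m + 1) - ln (real m) \<le> 1 / real m"
      using False by (simp add: ln_div field_simps)
    then show ?thesis using False by (simp add: field_simps)
  qed simp
  moreover have "ln (fact (Suc m) :: real) = ln (real m + 1) + ln (fact m)"
    by (simp add: ln_mult add.commute)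
  ultimately show ?case using Suc.IH by (simp add: algebra_simps)
qed

lemma ln_fact_upper: "1 \<le> m \<Longrightarrow> ln (fact m) \<le> real m * ln (real m) + ln (real m) - real m + 1"
proof (induction m rule: dec_induct)
  case base
  then show ?case by simp
next
  case (step m)
  then have m: "0 < real m" by simp
  have "ln (real m / (real m + 1)) \<le> real m / (real m + 1) - 1"
    using m by (intro ln_le_minus_one) simp
  then have "(real m + 1) * (ln (real m) - ln (real m + 1)) \<le> - 1"
    using m by (simp add: ln_div field_simps)
  moreover have "ln (fact (Suc m) :: real) = ln (real m + 1) + ln (fact m)"
    by (simp add: ln_mult add.commute)
  ultimately show ?case using step.IH by (simp add: algebra_simps)
qed

definition binomial_entropy :: "real \<Rightarrow> real \<Rightarrow> real" where
  "binomial_entropy x y = x * ln x - y * ln y - (x - y) * ln (x - y)"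

lemma binomial_entropy_nonneg: "0 < y \<Longrightarrow> y < x \<Longrightarrow> 0 \<le> binomial_entropy x y"
proof -
  assume "0 < y" "y < x"
  then have "y * ln y \<le> y * ln x" "(x - y) * ln (x - y) \<le> (x - y) * ln x"
    by (auto intro: mult_left_mono)
  then show ?thesis by (simp add: binomial_entropy_def algebra_simps)
qed

lemma binomial_entropy_divide:
  "0 < t \<Longrightarrow> 0 < y \<Longrightarrow> y < x \<Longrightarrow> binomial_entropy (x / t) (y / t) = binomial_entropy x y / t"
  by (simp add: binomial_entropy_def diff_divide_distrib[symmetric] ln_div field_simps)

lemma ln_binomial_approx:
  assumes "1 \<le> a" "a < L"
  shows "\<bar>ln (real (L choose a)) - binomial_entropy (real L) (real a)\<bar> \<le> 2 * ln (real L) + 2"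
proof -
  have "real (L choose a) = fact L / (fact a * fact (L - a))"
    using assms by (simp add: binomial_fact)
  then have "ln (real (L choose a)) = ln (fact L) - ln (fact a) - ln (fact (L - a))"
    by (simp add: ln_div ln_mult)
  moreover have "binomial_entropy (real L) (real a) =
      real L * ln (real L) - real a * ln (real a) - real (L - a) * ln (real (L - a))"
    using assms by (simp add: binomial_entropy_def of_nat_diff)
  moreover have "real L = real a + real (L - a)" "1 \<le> L" "1 \<le> L - a" using assms by auto
  moreover have "ln (real a) \<le> ln (real L)" "ln (real (L - a)) \<le> ln (real L)"
    "0 \<le> ln (real a)" "0 \<le> ln (real (L - a))"
    using assms by auto
  ultimately show ?thesis
    using ln_fact_upper[of L] ln_fact_upper[of a] ln_fact_upper[of "L - a"]
      ln_fact_lower[of L] ln_fact_lower[of a] ln_fact_lower[of "L - a"] assms(1)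
    unfolding abs_le_iff by linarith
qed

lemma tendsto_divide_nat_at_top:
  "filterlim n at_top sequentially \<Longrightarrow> (\<lambda>i. c / real (n i)) \<longlonglongrightarrow> 0"
  using tendsto_divide_0[OF tendsto_const filterlim_at_top_imp_at_infinity
      [OF filterlim_compose[OF filterlim_real_sequentially]]] .

lemma ln_binomial_asymptotics:
  fixes L a n :: "nat \<Rightarrow> nat"
  assumes n: "filterlim n at_top sequentially"
    and x: "(\<lambda>i. real (L i) / real (n i)) \<longlonglongrightarrow> x"
    and y: "(\<lambda>i. real (a i) / real (n i)) \<longlonglongrightarrow> y"
    and xy: "0 < y" "y < x"
  shows "(\<lambda>i. ln (real (L i choose a i)) / real (n i)) \<longlonglongrightarrow> binomial_entropy x y"
proof -
  have "\<forall>\<^sub>F i in sequentially. 0 < real (a i) / real (n i)"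
    using order_tendstoD(1)[OF y xy(1)] .
  moreover have "\<forall>\<^sub>F i in sequentially. real (a i) / real (n i) < real (L i) / real (n i)"
    using order_tendstoD[OF tendsto_diff[OF x y], of 0] xy by (auto elim: eventually_mono)
  ultimately have ev: "\<forall>\<^sub>F i in sequentially. 1 \<le> a i \<and> a i < L i \<and> 0 < n i"
    by eventually_elim (auto simp: zero_less_divide_iff divide_less_cancel)
  have "(\<lambda>i. binomial_entropy (real (L i) / real (n i)) (real (a i) / real (n i))) \<longlonglongrightarrow>
      binomial_entropy x y"
    unfolding binomial_entropy_def using xy by (intro tendsto_intros x y) auto
  moreover have "\<forall>\<^sub>F i in sequentially.
      binomial_entropy (real (L i) / real (n i)) (real (a i) / real (n i)) =
      binomial_entropy (real (L i)) (real (a i)) / real (n i)"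
    using ev by eventually_elim (simp add: binomial_entropy_divide)
  ultimately have main: "(\<lambda>i. binomial_entropy (real (L i)) (real (a i)) / real (n i)) \<longlonglongrightarrow>
      binomial_entropy x y"
    by (rule Lim_transform_eventually)
  have "(\<lambda>i. ln (real (L i) / real (n i)) * (1 / real (n i)) + ln (real (n i)) / real (n i))
      \<longlonglongrightarrow> ln x * 0 + 0"
    using xy by (intro tendsto_intros x tendsto_divide_nat_at_top[OF n]
        filterlim_compose[OF ln_x_over_x_tendsto_0 filterlim_compose[OF filterlim_real_sequentially n]])
      auto
  moreover have "\<forall>\<^sub>F i in sequentially.
      ln (real (L i) / real (n i)) * (1 / real (n i)) + ln (real (n i)) / real (n i)
      = ln (real (L i)) / real (n i)"
    using ev by eventually_elim (simp add: ln_div field_simps)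
  ultimately have ln_L: "(\<lambda>i. ln (real (L i)) / real (n i)) \<longlonglongrightarrow> 0"
    using Lim_transform_eventually by fastforce
  have bound: "(\<lambda>i. (2 * ln (real (L i)) + 2) / real (n i)) \<longlonglongrightarrow> 0"
    using tendsto_add[OF tendsto_mult_left[OF ln_L, of 2] tendsto_divide_nat_at_top[OF n, of 2]]
    by (simp add: add_divide_distrib)
  have "(\<lambda>i. (ln (real (L i choose a i)) - binomial_entropy (real (L i)) (real (a i))) / real (n i))
      \<longlonglongrightarrow> 0"
  proof (rule Lim_null_comparison[OF _ bound])
    show "\<forall>\<^sub>F i in sequentially.
        norm ((ln (real (L i choose a i)) - binomial_entropy (real (L i)) (real (a i))) / real (n i))
        \<le> (2 * ln (real (L i)) + 2) / real (n i)"
      using ev by eventually_elim (simp add: ln_binomial_approx divide_right_mono)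
  qed
  with main have "(\<lambda>i. binomial_entropy (real (L i)) (real (a i)) / real (n i) +
      (ln (real (L i choose a i)) - binomial_entropy (real (L i)) (real (a i))) / real (n i))
      \<longlonglongrightarrow> binomial_entropy x y + 0"
    by (rule tendsto_add)
  then show ?thesis by (simp add: diff_divide_distrib)
qed

lemma tendsto_ratio_nat_diff:
  fixes u v n :: "nat \<Rightarrow> nat"
  assumes u: "(\<lambda>i. real (u i) / real (n i)) \<longlonglongrightarrow> \<alpha>"
    and v: "(\<lambda>i. real (v i) / real (n i)) \<longlonglongrightarrow> \<beta>"
    and "\<beta> < \<alpha>"
  shows "(\<lambda>i. real (u i - v i) / real (n i)) \<longlonglongrightarrow> \<alpha> - \<beta>"
proof (rule Lim_transform_eventually)
  show "(\<lambda>i. real (u i) / real (n i) - real (v i) / real (n i)) \<longlonglongrightarrow> \<alpha> - \<beta>"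
    by (intro tendsto_diff u v)
  have "\<forall>\<^sub>F i in sequentially. real (v i) / real (n i) < real (u i) / real (n i)"
    using order_tendstoD(1)[OF tendsto_diff[OF u v], of 0] \<open>\<beta> < \<alpha>\<close> by (auto elim: eventually_mono)
  then show "\<forall>\<^sub>F i in sequentially.
      real (u i) / real (n i) - real (v i) / real (n i) = real (u i - v i) / real (n i)"
    by eventually_elim (auto simp: of_nat_diff diff_divide_distrib divide_less_cancel)
qed

lemma tendsto_ratio_nat_mult:
  assumes "(\<lambda>i. real (u i) / real (n i)) \<longlonglongrightarrow> \<alpha>"
  shows "(\<lambda>i. real (m * u i) / real (n i)) \<longlonglongrightarrow> real m * \<alpha>"
  using tendsto_mult_left[OF assms, of "real m"] by simp

lemma tile_parameters_tendsto:
  fixes k n :: "nat \<Rightarrow> nat"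
  assumes n: "filterlim n at_top sequentially"
    and k: "(\<lambda>i. real (k i) / real (n i)) \<longlonglongrightarrow> \<rho>"
    and \<rho>: "3/5 < \<rho>" "\<rho> < 2/3"
  shows "(\<lambda>i. real (num_tiles (n i) (k i) f) / real (n i)) \<longlonglongrightarrow> 2 * \<rho> - 1"
    and "(\<lambda>i. real (num_long_tiles (n i) (k i) f) / real (n i)) \<longlonglongrightarrow> 2 - 3 * \<rho>"
  unfolding num_tiles_def num_long_tiles_def
proof -
  have const: "(\<lambda>i. real m / real (n i)) \<longlonglongrightarrow> 0" for m
    using tendsto_divide_nat_at_top[OF n] .
  have "\<forall>\<^sub>F i in sequentially. 1 \<le> n i"
    using n by (simp add: filterlim_at_top)
  then have "\<forall>\<^sub>F i in sequentially. 1 = real (n i) / real (n i)"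
    by eventually_elim simp
  then have "(\<lambda>i. real (n i) / real (n i)) \<longlonglongrightarrow> 1"
    by (rule Lim_transform_eventually[OF tendsto_const])
  then have "(\<lambda>i. real (n i - length f) / real (n i)) \<longlonglongrightarrow> 1 - 0"
    by (rule tendsto_ratio_nat_diff[OF _ const]) simp
  moreover have "(\<lambda>i. real (k i - houses f) / real (n i)) \<longlonglongrightarrow> \<rho> - 0"
    using \<rho> by (intro tendsto_ratio_nat_diff[OF k const]) simp
  ultimately have nl: "(\<lambda>i. real (m * (n i - length f)) / real (n i)) \<longlonglongrightarrow> real m"
    and kq: "(\<lambda>i. real (m * (k i - houses f)) / real (n i)) \<longlonglongrightarrow> real m * \<rho>" for m
    using tendsto_ratio_nat_mult by fastforce+
  show "(\<lambda>i. real (2 * (k i - houses f) - (n i - length f)) / real (n i)) \<longlonglongrightarrow> 2 * \<rho> - 1"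
    using tendsto_ratio_nat_diff[OF kq[of 2] nl[of 1]] \<rho> by simp
  show "(\<lambda>i. real (2 * (n i - length f) - 3 * (k i - houses f)) / real (n i)) \<longlonglongrightarrow> 2 - 3 * \<rho>"
    using tendsto_ratio_nat_diff[OF nl[of 2] kq[of 3]] \<rho> by simp
qed

lemma limsup_ln_sum_le:
  fixes J :: "nat \<Rightarrow> real" and B :: "'a \<Rightarrow> nat \<Rightarrow> real" and n :: "nat \<Rightarrow> nat"
  assumes n: "filterlim n at_top sequentially" and "finite F"
    and B: "\<And>f. f \<in> F \<Longrightarrow> (\<lambda>i. ln (B f i) / real (n i)) \<longlonglongrightarrow> T"
    and "0 \<le> T"
    and J: "\<forall>\<^sub>F i in sequentially. 1 \<le> J i \<and> J i \<le> 1 + (\<Sum>f\<in>F. B f i)"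
  shows "limsup (\<lambda>i. ereal (ln (J i) / real (n i))) \<le> ereal T"
proof (rule ereal_le_epsilon2)
  fix e :: real assume "0 < e"
  have "\<forall>\<^sub>F i in sequentially. \<forall>f\<in>F. ln (B f i) / real (n i) < T + e / 2"
    using \<open>finite F\<close> \<open>0 < e\<close> by (intro eventually_ball_finite ballI order_tendstoD(2)[OF B]) auto
  moreover have "\<forall>\<^sub>F i in sequentially. ln (1 + real (card F)) / real (n i) < e / 2"
    using \<open>0 < e\<close> by (intro order_tendstoD(2)[OF tendsto_divide_nat_at_top[OF n]]) simp
  moreover have "\<forall>\<^sub>F i in sequentially. 1 \<le> n i"
    using n by (simp add: filterlim_at_top)
  ultimately have "\<forall>\<^sub>F i in sequentially. ln (J i) / real (n i) \<le> T + e"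
    using J
  proof eventually_elim
    case (elim i)
    define E where "E = exp ((T + e / 2) * real (n i))"
    have "1 \<le> E" using \<open>0 \<le> T\<close> \<open>0 < e\<close> by (simp add: E_def)
    have "B f i \<le> E" if "f \<in> F" for f
    proof (cases "0 < B f i")
      case True
      then have "ln (B f i) < (T + e / 2) * real (n i)"
        using elim that by (simp add: divide_less_eq)
      then show ?thesis using True unfolding E_def by (metis exp_less_mono exp_ln less_imp_le)
    qed (use \<open>1 \<le> E\<close> in simp)
    then have "J i \<le> (1 + real (card F)) * E"
      using elim sum_bounded_above[of F "\<lambda>f. B f i" E] \<open>1 \<le> E\<close> by (simp add: algebra_simps)
    then have "ln (J i) \<le> ln ((1 + real (card F)) * E)"
      using elim by (subst ln_le_cancel_iff) auto
    also have "\<dots> = ln (1 + real (card F)) + (T + e / 2) * real (n i)"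
      by (simp add: ln_mult E_def)
    finally show ?case
      using elim by (simp add: divide_le_eq field_simps)
  qed
  then have "limsup (\<lambda>i. ereal (ln (J i) / real (n i))) \<le> ereal (T + e)"
    by (intro Limsup_bounded) (auto elim: eventually_mono)
  then show "limsup (\<lambda>i. ereal (ln (J i) / real (n i))) \<le> ereal T + ereal e"
    by simp
qed

lemma limsup_ln_J_ES_le:
  fixes k n :: "nat \<Rightarrow> nat"
  assumes n: "filterlim n at_top sequentially"
    and k: "(\<lambda>i. real (k i) / real (n i)) \<longlonglongrightarrow> \<rho>"
    and \<rho>: "3/5 < \<rho>" "\<rho> < 2/3"
  shows "limsup (\<lambda>i. ereal (ln (real (J_ES (k i) (n i))) / real (n i)))
    \<le> ereal (binomial_entropy (2 * \<rho> - 1) (2 - 3 * \<rho>))"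
proof -
  define B where "B f i = real (num_tiles (n i) (k i) f choose num_long_tiles (n i) (k i) f)" for f i
  have "(\<lambda>i. ln (B f i) / real (n i)) \<longlonglongrightarrow> binomial_entropy (2 * \<rho> - 1) (2 - 3 * \<rho>)" for f
    unfolding B_def using \<rho>
    by (intro ln_binomial_asymptotics[OF n tile_parameters_tendsto[OF n k \<rho>]]) auto
  moreover have "0 \<le> binomial_entropy (2 * \<rho> - 1) (2 - 3 * \<rho>)"
    using \<rho> by (intro binomial_entropy_nonneg) auto
  moreover have "\<forall>\<^sub>F i in sequentially. 1 \<le> n i"
    using n by (simp add: filterlim_at_top)
  then have "\<forall>\<^sub>F i in sequentially. 1 \<le> real (J_ES (k i) (n i)) \<and>
      real (J_ES (k i) (n i)) \<le> 1 + (\<Sum>f\<in>final_blocks. B f i)"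
  proof eventually_elim
    case (elim i)
    then have "card (es_configs (n i) (k i)) \<le> (\<Sum>f\<in>final_blocks. B f i)"
      using card_es_configs_le[of "n i" "k i"] unfolding B_def of_nat_sum[symmetric] of_nat_le_iff
      by simp
    then show ?case by (simp add: J_ES_eq)
  qed
  ultimately show ?thesis
    by (intro limsup_ln_sum_le[OF n, of final_blocks]) (auto simp: final_blocks_def)
qed

lemma tendsto_nat_floor_ratio:
  assumes "0 \<le> x"
  shows "(\<lambda>i. real (nat \<lfloor>real i * x\<rfloor>) / real i) \<longlonglongrightarrow> x"
proof (rule real_tendsto_sandwich)
  have floor: "real i * x - 1 \<le> real (nat \<lfloor>real i * x\<rfloor>) \<and> real (nat \<lfloor>real i * x\<rfloor>) \<le> real i * x"
    for i :: nat
    using assms real_of_int_floor_ge_diff_one[of "real i * x"] of_int_floor_le[of "real i * x"] by simp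
  show "\<forall>\<^sub>F i in sequentially. x - 1 / real i \<le> real (nat \<lfloor>real i * x\<rfloor>) / real i"
    using eventually_gt_at_top[of 0]
  proof eventually_elim
    case (elim i)
    then have "x - 1 / real i = (real i * x - 1) / real i" by (simp add: field_simps)
    also have "\<dots> \<le> real (nat \<lfloor>real i * x\<rfloor>) / real i"
      using floor[of i] by (intro divide_right_mono) auto
    finally show ?case .
  qed
  show "\<forall>\<^sub>F i in sequentially. real (nat \<lfloor>real i * x\<rfloor>) / real i \<le> x"
    using eventually_gt_at_top[of 0]
  proof eventually_elim
    case (elim i)
    have "real (nat \<lfloor>real i * x\<rfloor>) / real i \<le> real i * x / real i"
      using floor[of i] by (intro divide_right_mono) auto
    then show ?case using elim by simp
  qed
  show "(\<lambda>i. x - 1 / real i) \<longlonglongrightarrow> x"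
    using tendsto_diff[OF tendsto_const lim_1_over_n, of x] by simp
qed simp

lemma tendsto_ratio_rescale:
  fixes u v :: "nat \<Rightarrow> real"
  assumes "(\<lambda>i. u i / real i) \<longlonglongrightarrow> \<alpha>" "(\<lambda>i. v i / real i) \<longlonglongrightarrow> \<beta>" "\<beta> \<noteq> 0"
  shows "(\<lambda>i. u i / v i) \<longlonglongrightarrow> \<alpha> / \<beta>"
proof (rule Lim_transform_eventually)
  show "(\<lambda>i. (u i / real i) / (v i / real i)) \<longlonglongrightarrow> \<alpha> / \<beta>"
    using assms by (rule tendsto_divide)
  show "\<forall>\<^sub>F i in sequentially. (u i / real i) / (v i / real i) = u i / v i"
    using eventually_gt_at_top[of 0] by eventually_elim simp
qed

lemma filterlim_at_top_if_ratio_tendsto: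
  fixes n :: "nat \<Rightarrow> nat"
  assumes "(\<lambda>i. real (n i) / real i) \<longlonglongrightarrow> c" "0 < c"
  shows "filterlim n at_top sequentially"
proof -
  have "\<forall>\<^sub>F i in sequentially. real (n i) / real i * real i = real (n i)"
    using eventually_gt_at_top[of 0] by eventually_elim simp
  then have "filterlim (\<lambda>i. real (n i)) at_top sequentially"
    by (rule filterlim_mono_eventually[OF filterlim_tendsto_pos_mult_at_top
        [OF assms filterlim_real_sequentially] order_refl order_refl])
  then show ?thesis by (simp add: filterlim_sequentially_iff_filterlim_real)
qed

lemma ex_limsup_ln_J_ES_ge:
  assumes \<rho>: "3/5 < \<rho>" "\<rho> < 2/3"
  shows "\<exists>k n. filterlim n at_top sequentially \<and> (\<lambda>i. real (k i) / real (n i)) \<longlonglongrightarrow> \<rho> \<and>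
    ereal (binomial_entropy (2 * \<rho> - 1) (2 - 3 * \<rho>))
      \<le> limsup (\<lambda>i. ereal (ln (real (J_ES (k i) (n i))) / real (n i)))"
proof -
  define x where "x = 2 * \<rho> - 1"
  define y where "y = 2 - 3 * \<rho>"
  have xy: "0 < y" "y < x" using \<rho> by (auto simp: x_def y_def)
  define L where "L i = nat \<lfloor>real i * x\<rfloor>" for i
  define a where "a i = nat \<lfloor>real i * y\<rfloor>" for i
  define n where "n i = 3 * L i + 2 * a i + 2" for i
  define k where "k i = 2 * L i + a i + 2" for i
  have L: "(\<lambda>i. real (L i) / real i) \<longlonglongrightarrow> x"
    unfolding L_def using xy by (intro tendsto_nat_floor_ratio) simp
  have a: "(\<lambda>i. real (a i) / real i) \<longlonglongrightarrow> y"
    unfolding a_def using xy by (intro tendsto_nat_floor_ratio) simp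
  have "(\<lambda>i. 3 * (real (L i) / real i) + 2 * (real (a i) / real i) + 2 / real i)
      \<longlonglongrightarrow> 3 * x + 2 * y + 0"
    by (intro tendsto_intros L a tendsto_divide_nat_at_top[OF filterlim_ident])
  then have n_ratio: "(\<lambda>i. real (n i) / real i) \<longlonglongrightarrow> 1"
    by (simp add: n_def add_divide_distrib x_def y_def add_ac)
  have "(\<lambda>i. 2 * (real (L i) / real i) + real (a i) / real i + 2 / real i)
      \<longlonglongrightarrow> 2 * x + y + 0"
    by (intro tendsto_intros L a tendsto_divide_nat_at_top[OF filterlim_ident])
  then have k_ratio: "(\<lambda>i. real (k i) / real i) \<longlonglongrightarrow> \<rho>"
    by (simp add: k_def add_divide_distrib x_def y_def add_ac)
  have n_lim: "filterlim n at_top sequentially"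
    using n_ratio by (rule filterlim_at_top_if_ratio_tendsto) simp
  have "(\<lambda>i. ln (real (L i choose a i)) / real (n i)) \<longlonglongrightarrow> binomial_entropy x y"
    using ln_binomial_asymptotics[OF n_lim _ _ xy] tendsto_ratio_rescale[OF L n_ratio]
      tendsto_ratio_rescale[OF a n_ratio] by simp
  then have "ereal (binomial_entropy x y) = limsup (\<lambda>i. ereal (ln (real (L i choose a i)) / real (n i)))"
    by (intro lim_imp_Limsup[symmetric] tendsto_ereal) simp_all
  also have "\<dots> \<le> limsup (\<lambda>i. ereal (ln (real (J_ES (k i) (n i))) / real (n i)))"
  proof (intro Limsup_mono always_eventually allI)
    fix i
    have "real (L i choose a i) \<le> real (J_ES (k i) (n i))"
      using card_es_configs_ge[of "L i" "a i"] by (simp add: J_ES_eq n_def k_def)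
    moreover have "1 \<le> real (J_ES (k i) (n i))" by (simp add: J_ES_eq)
    moreover have "ln c \<le> ln j" if "0 \<le> c" "c \<le> j" "1 \<le> j" for c j :: real
      using that by (cases "c = 0") auto
    ultimately have "ln (real (L i choose a i)) \<le> ln (real (J_ES (k i) (n i)))"
      by simp
    then show "ereal (ln (real (L i choose a i)) / real (n i))
        \<le> ereal (ln (real (J_ES (k i) (n i))) / real (n i))"
      by (simp add: divide_right_mono)
  qed
  finally have "ereal (binomial_entropy x y)
      \<le> limsup (\<lambda>i. ereal (ln (real (J_ES (k i) (n i))) / real (n i)))" .
  moreover have "(\<lambda>i. real (k i) / real (n i)) \<longlonglongrightarrow> \<rho>"
    using tendsto_ratio_rescale[OF k_ratio n_ratio] by simp
  ultimately show ?thesis using n_lim unfolding x_def y_def by blast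
qed

theorem mainTheorem3:
  fixes \<rho> :: real
  assumes "3/5 < \<rho>" and "\<rho> < 2/3"
  shows "S_ES \<rho> = ereal ((2*\<rho> - 1) * ln (2*\<rho> - 1) - (2 - 3*\<rho>) * ln (2 - 3*\<rho>)
                              - (5*\<rho> - 3) * ln (5*\<rho> - 3))"
proof -
  have "(2*\<rho> - 1) - (2 - 3*\<rho>) = 5*\<rho> - 3" by simp
  then have entropy: "(2*\<rho> - 1) * ln (2*\<rho> - 1) - (2 - 3*\<rho>) * ln (2 - 3*\<rho>) - (5*\<rho> - 3) * ln (5*\<rho> - 3)
      = binomial_entropy (2 * \<rho> - 1) (2 - 3 * \<rho>)"
    unfolding binomial_entropy_def by simp
  have "S_ES \<rho> \<le> ereal (binomial_entropy (2 * \<rho> - 1) (2 - 3 * \<rho>))"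
    unfolding S_ES_def by (rule Sup_least) (auto intro: limsup_ln_J_ES_le[OF _ _ assms])
  moreover obtain k n where "filterlim n at_top sequentially" "(\<lambda>i. real (k i) / real (n i)) \<longlonglongrightarrow> \<rho>"
    and "ereal (binomial_entropy (2 * \<rho> - 1) (2 - 3 * \<rho>))
      \<le> limsup (\<lambda>i. ereal (ln (real (J_ES (k i) (n i))) / real (n i)))"
    using ex_limsup_ln_J_ES_ge[OF assms] by blast
  then have "ereal (binomial_entropy (2 * \<rho> - 1) (2 - 3 * \<rho>)) \<le> S_ES \<rho>"
    unfolding S_ES_def by (blast intro: Sup_upper2)
  ultimately show ?thesis unfolding entropy by (rule antisym)
qed

end
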